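(* Let $G$ be a bipartite simple graph with stable sets $X$ and $Y$, suppose $G\cong H_1\oplus H_2$ is a decomposition of $G$, and let $n\ge1$. If $G$ is edge-magic (respectively, super edge-magic), then $S_{2n}(G;H_1,H_2)$ is edge-magic (respectively, super edge-magic).
   Context: For a $(p,q)$-graph $G$ ($p$ vertices, $q$ edges), an edge-magic labeling is a bijection $f:V(G)\cup E(G)\to[1,p+q]$ such that $f(x)+f(xy)+f(y)$ is constant for every edge $xy$; it is super edge-magic if moreover $f(V(G))=[1,p]$. A decomposition $G\cong H_1\oplus H_2$ means $H_1,H_2$ are subgraphs of $G$ whose edge sets partition $E(G)$. Writing $X=\{x_i\}_{i=1}^s$, $Y=\{y_j\}_{j=1}^t$, $S_{2n}(G;H_1,H_2)$ is the graph with vertex set $X\cup Y\cup\bigcup_{k=1}^n X_k\cup\bigcup_{k=1}^n Y_k$, where $X_k=\{x_i^k\}_{i=1}^s$, $Y_k=\{y_j^k\}_{j=1}^t$ are new vertices, and edge set $E(G)\cup\{x_iy_j^k: x_iy_j\in E(H_1),\,k\in[1,n]\}\cup\{x_i^ky_j: x_iy_j\in E(H_2),\,k\in[1,n]\}$. *)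

theory Defs
  imports Main
begin

definition simple_graph :: "'v set \<Rightarrow> 'v set set \<Rightarrow> bool" where
  "simple_graph V E \<longleftrightarrow> finite V \<and>
     (\<forall>e\<in>E. \<exists>x y. x \<in> V \<and> y \<in> V \<and> x \<noteq> y \<and> e = {x, y})"

definition bipartite_with :: "'v set \<Rightarrow> 'v set set \<Rightarrow> 'v set \<Rightarrow> 'v set \<Rightarrow> bool" where
  "bipartite_with V E X Y \<longleftrightarrow> X \<union> Y = V \<and> X \<inter> Y = {} \<and>
     (\<forall>e\<in>E. \<exists>x y. x \<in> X \<and> y \<in> Y \<and> e = {x, y})"

definition edge_magic_labeling ::
  "'v set \<Rightarrow> 'v set set \<Rightarrow> ('v + 'v set \<Rightarrow> nat) \<Rightarrow> bool" where
  "edge_magic_labeling V E f \<longleftrightarrow>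
     bij_betw f (Inl ` V \<union> Inr ` E) {1 .. card V + card E} \<and>
     (\<exists>k. \<forall>x y. {x, y} \<in> E \<longrightarrow> f (Inl x) + f (Inr {x, y}) + f (Inl y) = k)"

definition super_edge_magic_labeling ::
  "'v set \<Rightarrow> 'v set set \<Rightarrow> ('v + 'v set \<Rightarrow> nat) \<Rightarrow> bool" where
  "super_edge_magic_labeling V E f \<longleftrightarrow>
     edge_magic_labeling V E f \<and> f ` (Inl ` V) = {1 .. card V}"

definition edge_magic :: "'v set \<Rightarrow> 'v set set \<Rightarrow> bool" where
  "edge_magic V E \<longleftrightarrow> (\<exists>f. edge_magic_labeling V E f)"

definition super_edge_magic :: "'v set \<Rightarrow> 'v set set \<Rightarrow> bool" where
  "super_edge_magic V E \<longleftrightarrow> (\<exists>f. super_edge_magic_labeling V E f)"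

text \<open>The graph S_{2n}(G;H1,H2). Vertex v of G is encoded as (v,0); the k-th copy
  v^k (k \<in> [1,n]) of v as (v,k). E1, E2 are the edge sets of H1, H2.\<close>
definition S2n_vertices :: "'v set \<Rightarrow> 'v set \<Rightarrow> nat \<Rightarrow> ('v \<times> nat) set" where
  "S2n_vertices X Y n = (X \<union> Y) \<times> {0} \<union> X \<times> {1..n} \<union> Y \<times> {1..n}"

definition S2n_edges ::
  "'v set \<Rightarrow> 'v set \<Rightarrow> 'v set set \<Rightarrow> 'v set set \<Rightarrow> 'v set set \<Rightarrow> nat \<Rightarrow> ('v \<times> nat) set set" where
  "S2n_edges X Y E E1 E2 n =
     {{(x, 0), (y, 0)} | x y. {x, y} \<in> E}
   \<union> {{(x, 0), (y, k)} | x y k. x \<in> X \<and> y \<in> Y \<and> {x, y} \<in> E1 \<and> k \<in> {1..n}}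
   \<union> {{(x, k), (y, 0)} | x y k. x \<in> X \<and> y \<in> Y \<and> {x, y} \<in> E2 \<and> k \<in> {1..n}}"

end

theory Submission
  imports Defs
begin

text \<open>Index the vertices of \<open>S\<^sub>2\<^sub>n(G;H\<^sub>1,H\<^sub>2)\<close> by \<open>V \<times> [0,n]\<close>, copy 0 being \<open>G\<close> itself.
  Every edge \<open>xy\<close> of \<open>G\<close> (with \<open>x \<in> X\<close>, \<open>y \<in> Y\<close>) has exactly \<open>n+1\<close> lifts, one for each value
  \<open>s \<in> [0,n]\<close> of the sum of the copy indices of its ends: \<open>x y\<^sup>s\<close> if \<open>xy \<in> H\<^sub>1\<close> and \<open>x\<^sup>s y\<close> if
  \<open>xy \<in> H\<^sub>2\<close>. So vertices and edges of the new graph correspond bijectively to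
  \<open>(V \<union> E) \<times> [0,n]\<close>. Given an edge-magic labeling \<open>f\<close> of \<open>G\<close> with constant \<open>K\<close>, replace each label
  \<open>t\<close> by the block \<open>[(n+1)(t-1)+1, (n+1)t]\<close>: the copy \<open>v\<^sup>c\<close> gets offset \<open>c\<close> in the block of
  \<open>f(v)\<close>, the lift of \<open>xy\<close> with index sum \<open>s\<close> gets offset \<open>n - s\<close> in the block of \<open>f(xy)\<close>.
  The result is a bijection onto \<open>[1,(n+1)(p+q)]\<close>, and on every edge the three offsets add up to
  \<open>n\<close>, so the magic constant is \<open>(n+1)(K-3)+n+3\<close>. If \<open>f\<close> is super, the vertices fill the first
  \<open>(n+1)p\<close> labels.\<close>

lemma bij_betw_block_index:
  fixes N m :: nat
  assumes "0 < N"
  shows "bij_betw (\<lambda>(a, c). N * (a - 1) + c + 1) ({1..m} \<times> {0..<N}) {1..N * m}"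
proof (rule bij_betw_byWitness[where f' = "\<lambda>t. ((t - 1) div N + 1, (t - 1) mod N)"])
  show "(\<lambda>(a, c). N * (a - 1) + c + 1) ` ({1..m} \<times> {0..<N}) \<subseteq> {1..N * m}"
  proof (clarsimp simp del: One_nat_def)
    fix a c assume "1 \<le> a" "a \<le> m" "c < N"
    then have "N * (a - 1) + c + 1 \<le> N * a"
      by (cases a) auto
    also have "\<dots> \<le> N * m" using \<open>a \<le> m\<close> by simp
    finally show "N * (a - 1) + c + 1 \<le> N * m" .
  qed
  show "(\<lambda>t. ((t - 1) div N + 1, (t - 1) mod N)) ` {1..N * m} \<subseteq> {1..m} \<times> {0..<N}"
  proof (rule image_subsetI)
    fix t :: nat assume "t \<in> {1..N * m}"
    then have "t - 1 < m * N" by (auto simp: mult.commute)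
    then show "((t - 1) div N + 1, (t - 1) mod N) \<in> {1..m} \<times> {0..<N}"
      using assms less_mult_imp_div_less by (simp add: Suc_le_eq)
  qed
qed (use assms in auto)

definition block_label :: "nat \<Rightarrow> ('a \<Rightarrow> nat) \<Rightarrow> 'a \<times> nat \<Rightarrow> nat" where
  "block_label N f = (\<lambda>(a, c). N * (f a - 1) + c + 1)"

lemma bij_betw_block_label:
  assumes "bij_betw f A {1..m}" and "0 < N"
  shows "bij_betw (block_label N f) (A \<times> {0..<N}) {1..N * m}"
proof -
  have "block_label N f = (\<lambda>(a, c). N * (a - 1) + c + 1) \<circ> map_prod f id"
    by (auto simp: block_label_def fun_eq_iff)
  with bij_betw_trans[OF bij_betw_map_prod[OF assms(1) bij_betw_id] bij_betw_block_index[OF assms(2)]]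
  show ?thesis by simp
qed

fun copy_index :: "nat \<Rightarrow> ('v \<times> nat) + ('v \<times> nat) set \<Rightarrow> ('v + 'v set) \<times> nat" where
  "copy_index n (Inl (v, c)) = (Inl v, c)"
| "copy_index n (Inr e) = (Inr (fst ` e), n - (\<Sum>p\<in>e. snd p))"

definition S2n_labeling :: "nat \<Rightarrow> ('v + 'v set \<Rightarrow> nat) \<Rightarrow> ('v \<times> nat) + ('v \<times> nat) set \<Rightarrow> nat" where
  "S2n_labeling n f = block_label (Suc n) f \<circ> copy_index n"

text \<open>For \<open>s = 0\<close> both branches give the edge \<open>xy\<close> of \<open>G\<close> itself.\<close>

definition S2n_edge_lift :: "'v set set \<Rightarrow> 'v \<Rightarrow> 'v \<Rightarrow> nat \<Rightarrow> ('v \<times> nat) set" where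
  "S2n_edge_lift E1 x y s = (if {x, y} \<in> E1 then {(x, 0), (y, s)} else {(x, s), (y, 0)})"

lemma S2n_vertices_eq: "X \<union> Y = V \<Longrightarrow> S2n_vertices X Y n = V \<times> {0..n}"
  unfolding S2n_vertices_def by (auto simp: Suc_le_eq)

lemma S2n_edges_eq_lifts:
  assumes "bipartite_with V E X Y" and "E1 \<union> E2 = E" and "E1 \<inter> E2 = {}"
  shows "S2n_edges X Y E E1 E2 n =
    {S2n_edge_lift E1 x y s | x y s. x \<in> X \<and> y \<in> Y \<and> {x, y} \<in> E \<and> s \<le> n}"
proof (intro equalityI subsetI)
  have oriented: "\<exists>x0 y0. x0 \<in> X \<and> y0 \<in> Y \<and> {x, y} = {x0, y0}" if "{x, y} \<in> E" for x y
    using assms(1) that unfolding bipartite_with_def by blast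
  fix e' assume "e' \<in> S2n_edges X Y E E1 E2 n"
  then consider
      (base) x y where "e' = {(x, 0), (y, 0)}" "{x, y} \<in> E"
    | (E1) x y k where "e' = {(x, 0), (y, k)}" "x \<in> X" "y \<in> Y" "{x, y} \<in> E1" "k \<in> {1..n}"
    | (E2) x y k where "e' = {(x, k), (y, 0)}" "x \<in> X" "y \<in> Y" "{x, y} \<in> E2" "k \<in> {1..n}"
    unfolding S2n_edges_def by blast
  then show "e' \<in> {S2n_edge_lift E1 x y s | x y s. x \<in> X \<and> y \<in> Y \<and> {x, y} \<in> E \<and> s \<le> n}"
  proof cases
    case base
    then obtain x0 y0 where "x0 \<in> X" "y0 \<in> Y" "{x, y} = {x0, y0}" using oriented by blast
    moreover have "e' = S2n_edge_lift E1 x0 y0 0"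
      using base \<open>{x, y} = {x0, y0}\<close> by (auto simp: S2n_edge_lift_def doubleton_eq_iff)
    ultimately show ?thesis using base by auto
  next
    case E1
    then show ?thesis using assms(2) by (auto simp: S2n_edge_lift_def)
  next
    case E2
    then have "{x, y} \<notin> E1" using assms(3) by blast
    then show ?thesis using E2 assms(2) by (auto simp: S2n_edge_lift_def)
  qed
next
  fix e' assume "e' \<in> {S2n_edge_lift E1 x y s | x y s. x \<in> X \<and> y \<in> Y \<and> {x, y} \<in> E \<and> s \<le> n}"
  then obtain x y s where e': "e' = S2n_edge_lift E1 x y s" "x \<in> X" "y \<in> Y" "{x, y} \<in> E" "s \<le> n"
    by blast
  show "e' \<in> S2n_edges X Y E E1 E2 n"
  proof (cases "s = 0")
    case True
    then show ?thesis using e' unfolding S2n_edges_def S2n_edge_lift_def by auto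
  next
    case False
    then show ?thesis using e' assms(2) unfolding S2n_edges_def S2n_edge_lift_def by auto
  qed
qed

lemma copy_index_edge_lift:
  "x \<noteq> y \<Longrightarrow> copy_index n (Inr (S2n_edge_lift E1 x y s)) = (Inr {x, y}, n - s)"
  by (auto simp: S2n_edge_lift_def)

lemma bij_betw_copy_index_edges:
  fixes V X Y :: "'v set"
  assumes bip: "bipartite_with V E X Y" and "E1 \<union> E2 = E" and "E1 \<inter> E2 = {}"
  shows "bij_betw (copy_index n) (Inr ` S2n_edges X Y E E1 E2 n) (Inr ` E \<times> {0..<Suc n})"
  unfolding bij_betw_def
proof
  have XY: "X \<inter> Y = {}"
    using bip unfolding bipartite_with_def by auto
  show "inj_on (copy_index n) (Inr ` S2n_edges X Y E E1 E2 n)"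
  proof (rule inj_onI)
    fix u w assume "u \<in> Inr ` S2n_edges X Y E E1 E2 n" "w \<in> Inr ` S2n_edges X Y E E1 E2 n"
      and eq: "copy_index n u = copy_index n w"
    then obtain x y s x' y' s' where
      u: "u = Inr (S2n_edge_lift E1 x y s)" "x \<in> X" "y \<in> Y" "s \<le> n" and
      w: "w = Inr (S2n_edge_lift E1 x' y' s')" "x' \<in> X" "y' \<in> Y" "s' \<le> n"
      unfolding S2n_edges_eq_lifts[OF assms] by blast
    have "x \<noteq> y" "x' \<noteq> y'" using u w XY by auto
    with eq u w have "{x, y} = {x', y'}" "n - s = n - s'"
      by (simp_all del: copy_index.simps add: copy_index_edge_lift)
    moreover have "x = x'" "y = y'"
      using \<open>{x, y} = {x', y'}\<close> u w XY by (auto simp: doubleton_eq_iff)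
    moreover have "s = s'" using \<open>n - s = n - s'\<close> u w by simp
    ultimately show "u = w" using u w by simp
  qed
  show "copy_index n ` Inr ` S2n_edges X Y E E1 E2 n = Inr ` E \<times> {0..<Suc n}"
  proof (intro equalityI subsetI)
    fix p assume "p \<in> copy_index n ` Inr ` S2n_edges X Y E E1 E2 n"
    then obtain x y s where "p = copy_index n (Inr (S2n_edge_lift E1 x y s))"
      "x \<in> X" "y \<in> Y" "{x, y} \<in> E"
      unfolding S2n_edges_eq_lifts[OF assms] by blast
    moreover then have "x \<noteq> y" using XY by auto
    ultimately show "p \<in> Inr ` E \<times> {0..<Suc n}"
      by (simp del: copy_index.simps add: copy_index_edge_lift)
  next
    fix p :: "('v + 'v set) \<times> nat" assume "p \<in> Inr ` E \<times> {0..<Suc n}"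
    then obtain e c where p: "p = (Inr e, c)" "e \<in> E" "c \<le> n" by auto
    then obtain x y where xy: "x \<in> X" "y \<in> Y" "e = {x, y}"
      using bip unfolding bipartite_with_def by blast
    then have "x \<noteq> y" using XY by auto
    then have "p = copy_index n (Inr (S2n_edge_lift E1 x y (n - c)))"
      using p xy by (simp del: copy_index.simps add: copy_index_edge_lift)
    moreover have "S2n_edge_lift E1 x y (n - c) \<in> S2n_edges X Y E E1 E2 n"
      unfolding S2n_edges_eq_lifts[OF assms] using p xy diff_le_self by blast
    ultimately show "p \<in> copy_index n ` Inr ` S2n_edges X Y E E1 E2 n" by blast
  qed
qed

lemma bij_betw_copy_index:
  fixes V X Y :: "'v set"
  assumes bip: "bipartite_with V E X Y" and "E1 \<union> E2 = E" and "E1 \<inter> E2 = {}"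
  shows "bij_betw (copy_index n)
    (Inl ` S2n_vertices X Y n \<union> Inr ` S2n_edges X Y E E1 E2 n) ((Inl ` V \<union> Inr ` E) \<times> {0..<Suc n})"
proof -
  have V_eq: "S2n_vertices X Y n = V \<times> {0..n}"
    using bip unfolding bipartite_with_def by (simp add: S2n_vertices_eq)
  have vertices: "bij_betw (copy_index n) (Inl ` (V \<times> {0..n})) (Inl ` V \<times> {0..<Suc n})"
    by (rule bij_betw_byWitness[where f' = "\<lambda>(d, c). Inl (projl d, c)"]) auto
  have "Inl ` V \<times> {0..<Suc n} \<inter> Inr ` E \<times> {0..<Suc n} = {}" by blast
  from bij_betw_combine[OF vertices bij_betw_copy_index_edges[OF assms] this] show ?thesis
    by (simp add: V_eq Sigma_Un_distrib1)
qed

lemma S2n_labeling_edge_sum: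
  assumes "a \<noteq> b" and "c1 + c2 \<le> n"
    and "0 < f (Inl a)" and "0 < f (Inr {a, b})" and "0 < f (Inl b)"
  shows "S2n_labeling n f (Inl (a, c1)) + S2n_labeling n f (Inr {(a, c1), (b, c2)})
           + S2n_labeling n f (Inl (b, c2))
         = Suc n * (f (Inl a) + f (Inr {a, b}) + f (Inl b) - 3) + n + 3"
proof -
  have "fst ` {(a, c1), (b, c2)} = {a, b}" by simp
  moreover have "(\<Sum>p\<in>{(a, c1), (b, c2)}. snd p) = c1 + c2" using assms(1) by simp
  ultimately have "S2n_labeling n f (Inl (a, c1)) + S2n_labeling n f (Inr {(a, c1), (b, c2)})
           + S2n_labeling n f (Inl (b, c2))
      = Suc n * (f (Inl a) - 1) + Suc n * (f (Inr {a, b}) - 1) + Suc n * (f (Inl b) - 1)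
        + (c1 + (n - (c1 + c2)) + c2) + 3"
    by (simp add: S2n_labeling_def block_label_def)
  also have "\<dots> = Suc n * (f (Inl a) + f (Inr {a, b}) + f (Inl b) - 3) + n + 3"
    using assms(2-) gr0_implies_Suc[of "f (Inl a)"] gr0_implies_Suc[of "f (Inr {a, b})"]
      gr0_implies_Suc[of "f (Inl b)"]
    by (auto simp: algebra_simps)
  finally show ?thesis .
qed

lemma edge_magic_labeling_S2n:
  assumes bip: "bipartite_with V E X Y" and "E1 \<union> E2 = E" and "E1 \<inter> E2 = {}"
    and f: "edge_magic_labeling V E f"
  shows "edge_magic_labeling (S2n_vertices X Y n) (S2n_edges X Y E E1 E2 n) (S2n_labeling n f)"
proof -
  let ?g = "S2n_labeling n f" and ?V' = "S2n_vertices X Y n" and ?E' = "S2n_edges X Y E E1 E2 n"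
  define m where "m = card V + card E"
  have f_bij: "bij_betw f (Inl ` V \<union> Inr ` E) {1..m}"
    and "\<exists>K. \<forall>x y. {x, y} \<in> E \<longrightarrow> f (Inl x) + f (Inr {x, y}) + f (Inl y) = K"
    using f unfolding edge_magic_labeling_def m_def by blast+
  then obtain K where K: "\<And>x y. {x, y} \<in> E \<Longrightarrow> f (Inl x) + f (Inr {x, y}) + f (Inl y) = K"
    by blast
  have g_bij: "bij_betw ?g (Inl ` ?V' \<union> Inr ` ?E') {1..Suc n * m}"
    using bij_betw_trans[OF bij_betw_copy_index[OF assms(1-3)] bij_betw_block_label[OF f_bij]]
    by (simp add: S2n_labeling_def)
  then have "finite ?V'" "finite ?E'"
    using bij_betw_finite[OF g_bij] by (simp_all add: finite_image_iff)
  then have "card (Inl ` ?V' \<union> Inr ` ?E') = card ?V' + card ?E'"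
    using card_Plus unfolding Plus_def by blast
  with bij_betw_same_card[OF g_bij] have "card ?V' + card ?E' = Suc n * m"
    by simp
  moreover have "?g (Inl u) + ?g (Inr {u, w}) + ?g (Inl w) = Suc n * (K - 3) + n + 3"
    if edge: "{u, w} \<in> ?E'" for u w
  proof -
    obtain x y s where "{u, w} = S2n_edge_lift E1 x y s" "x \<in> X" "y \<in> Y" "{x, y} \<in> E" "s \<le> n"
      using edge unfolding S2n_edges_eq_lifts[OF assms(1-3)] by blast
    moreover from this obtain c1 c2 where uw: "{u, w} = {(x, c1), (y, c2)}" "c1 + c2 \<le> n"
      unfolding S2n_edge_lift_def by (metis add_0 add.right_neutral)
    moreover have "x \<in> V" "y \<in> V" "x \<noteq> y"
      using calculation bip unfolding bipartite_with_def by auto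
    ultimately have "?g (Inl (x, c1)) + ?g (Inr {(x, c1), (y, c2)}) + ?g (Inl (y, c2))
        = Suc n * (K - 3) + n + 3"
      using K[of x y] S2n_labeling_edge_sum[of x y c1 c2 n f] f_bij
      unfolding bij_betw_def by fastforce
    with uw(1) show ?thesis
      by (auto simp: doubleton_eq_iff ac_simps insert_commute)
  qed
  ultimately show ?thesis
    using g_bij unfolding edge_magic_labeling_def by auto
qed

lemma super_edge_magic_labeling_S2n:
  assumes bip: "bipartite_with V E X Y" and "E1 \<union> E2 = E" and "E1 \<inter> E2 = {}"
    and f: "super_edge_magic_labeling V E f"
  shows "super_edge_magic_labeling (S2n_vertices X Y n) (S2n_edges X Y E E1 E2 n) (S2n_labeling n f)"
proof -
  have f_em: "edge_magic_labeling V E f" and f_V: "f ` Inl ` V = {1..card V}"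
    using f unfolding super_edge_magic_labeling_def by auto
  have V_eq: "S2n_vertices X Y n = V \<times> {0..n}"
    using bip unfolding bipartite_with_def by (simp add: S2n_vertices_eq)
  have "bij_betw f (Inl ` V) {1..card V}"
    using f_em unfolding edge_magic_labeling_def using bij_betw_subset[OF _ Un_upper1 f_V] by blast
  then have block_image: "block_label (Suc n) f ` (Inl ` V \<times> {0..<Suc n}) = {1..Suc n * card V}"
    by (rule bij_betw_imp_surj_on[OF bij_betw_block_label]) simp
  have "copy_index n \<circ> Inl = map_prod Inl id"
    by (auto simp: fun_eq_iff)
  then have "copy_index n ` Inl ` (V \<times> {0..n}) = map_prod Inl id ` (V \<times> {0..n})"
    by (metis image_comp)
  also have "\<dots> = Inl ` V \<times> {0..<Suc n}"
    by (rule map_prod_surj_on) auto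
  finally have "S2n_labeling n f ` Inl ` S2n_vertices X Y n = {1..Suc n * card V}"
    by (simp only: S2n_labeling_def V_eq image_comp[symmetric] block_image)
  also have "Suc n * card V = card (S2n_vertices X Y n)"
    by (simp add: V_eq card_cartesian_product)
  finally have "S2n_labeling n f ` Inl ` S2n_vertices X Y n = {1..card (S2n_vertices X Y n)}" .
  with edge_magic_labeling_S2n[OF assms(1-3) f_em] show ?thesis
    unfolding super_edge_magic_labeling_def by simp
qed

theorem mainTheorem9:
  fixes V X Y :: "'v set" and E E1 E2 :: "'v set set" and n :: nat
  assumes "simple_graph V E"
    and "bipartite_with V E X Y"
    and "E1 \<subseteq> E" and "E2 \<subseteq> E" and "E1 \<union> E2 = E" and "E1 \<inter> E2 = {}"
    and "n \<ge> 1"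
  shows "(edge_magic V E \<longrightarrow>
           edge_magic (S2n_vertices X Y n) (S2n_edges X Y E E1 E2 n))
       \<and> (super_edge_magic V E \<longrightarrow>
           super_edge_magic (S2n_vertices X Y n) (S2n_edges X Y E E1 E2 n))"
  \<comment> \<open>Finiteness of \<open>G\<close> comes from the labeling, and for \<open>n = 0\<close> the construction returns \<open>G\<close>.\<close>
  unfolding edge_magic_def super_edge_magic_def
  using edge_magic_labeling_S2n[OF assms(2,5,6)] super_edge_magic_labeling_S2n[OF assms(2,5,6)]
  by meson

end
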